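(* Let $\mathbb{Z}$ be a finite-dimensional Euclidean space, $F_i:\mathbb{Z}\to\mathbb{Z}$ ($i=1,\dots,N$) be $\frac1{L_0}$-co-coercive, $F=\frac1N\sum_iF_i$, and suppose there is $\sigma>0$ such that for a random index $i$ drawn from a given distribution, $\mathbb{E}[F_i(z)]=F(z)$ and $\mathbb{E}\|F_i(z)-F(z)\|^2\le\sigma^2$ for all $z$. Let $\{z^k\}$ be a sequence of iterates (produced by the stochastic inexact Halpern scheme) and, at iteration $k$, let $S_k^{(1)},S_k^{(2)}$ be random minibatches of i.i.d. indices with $|S_k^{(1)}|=N_k^{(1)}$, $|S_k^{(2)}|=N_k^{(2)}$, and $p_k\in(0,1]$ with $p_0=1$. Define $\widetilde F(z^k):=\frac1{N_k^{(1)}}\sum_{i\in S_k^{(1)}}F_i(z^k)$ with probability $p_k$, and $\widetilde F(z^k):=\widetilde F(z^{k-1})+\frac1{N_k^{(2)}}\sum_{i\in S_k^{(2)}}(F_i(z^k)-F_i(z^{k-1}))$ with probability $1-p_k$. Then for all $k\ge1$, \[ \mathbb{E}\|\widetilde F(z^k)-F(z^k)\|^2\le\frac{p_k\sigma^2}{N_k^{(1)}}+(1-p_k)\Big(\mathbb{E}\|\widetilde F(z^{k-1})-F(z^{k-1})\|^2+\frac{L_0^2}{N_k^{(2)}}\mathbb{E}\|z^k-z^{k-1}\|^2\Big). \] Moreover, given $\epsilon>0$, $a>0$, if $\sigma_k:=\epsilon(k+1)^{-a}$, $p_k=1-\frac{(k/(k+1))^{2a}}{2-(k/(k+1))^{2a+1}}$,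 $N_k^{(1)}=\big\lceil 2\sigma^2/(\epsilon^2(k+1)^{-2a})\big\rceil$ and $N_k^{(2)}=\big\lceil 2L_0^2\|z^k-z^{k-1}\|^2/(\epsilon^2(k+1)^{-(2a+1)})\big\rceil$ for $k\ge0$ ($N_0^{(2)}$ not needed), then $\mathbb{E}\|\widetilde F(z^k)-F(z^k)\|^2\le\sigma_k^2$ for all $k\ge0$.
   Context: $c$-co-coercive means $\langle F(x_1)-F(x_2),x_1-x_2\rangle\ge c\|F(x_1)-F(x_2)\|^2$ for all $x_1,x_2$. $\mathbb{E}$ is the expectation over all randomness up to iteration $k$. *)

theory Defs
  imports "HOL-Probability.Probability"
begin

definition cocoercive :: "real \<Rightarrow> ('a::real_inner \<Rightarrow> 'a) \<Rightarrow> bool" where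
  "cocoercive c G \<longleftrightarrow> (\<forall>x1 x2. inner (G x1 - G x2) (x1 - x2) \<ge> c * (norm (G x1 - G x2))\<^sup>2)"

fun iid_pmf :: "'b pmf \<Rightarrow> nat \<Rightarrow> 'b list pmf" where
  "iid_pmf D 0 = return_pmf []"
| "iid_pmf D (Suc n) = bind_pmf D (\<lambda>i. map_pmf (Cons i) (iid_pmf D n))"

definition batch_avg :: "(nat \<Rightarrow> 'a::real_vector) \<Rightarrow> nat list \<Rightarrow> 'a" where
  "batch_avg G S = (1 / real (length S)) *\<^sub>R sum_list (map G S)"

text \<open>Joint law of the history [(z^0, Ft(z^0)), ..., (z^k, Ft(z^k))] of the scheme.
  upd k h gives z^(k+1) from the history h up to iteration k (arbitrary adapted rule,
  e.g. the stochastic inexact Halpern step).  N2 k z^k z^(k-1) is the size of the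
  second minibatch at iteration k (may depend on the current iterates).\<close>
primrec svrg_hist ::
  "(nat \<Rightarrow> 'a::euclidean_space \<Rightarrow> 'a) \<Rightarrow> nat pmf \<Rightarrow> (nat \<Rightarrow> real) \<Rightarrow> (nat \<Rightarrow> nat)
   \<Rightarrow> (nat \<Rightarrow> 'a \<Rightarrow> 'a \<Rightarrow> nat) \<Rightarrow> (nat \<Rightarrow> ('a \<times> 'a) list \<Rightarrow> 'a) \<Rightarrow> 'a \<Rightarrow> nat
   \<Rightarrow> ('a \<times> 'a) list pmf" where
  "svrg_hist Fs D p N1 N2 upd z0 0 =
     map_pmf (\<lambda>S. [(z0, batch_avg (\<lambda>i. Fs i z0) S)]) (iid_pmf D (N1 0))"
| "svrg_hist Fs D p N1 N2 upd z0 (Suc k) =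
     bind_pmf (svrg_hist Fs D p N1 N2 upd z0 k) (\<lambda>h.
       bind_pmf (bernoulli_pmf (p (Suc k))) (\<lambda>b.
         if b then
           map_pmf (\<lambda>S. h @ [(upd k h, batch_avg (\<lambda>i. Fs i (upd k h)) S)])
             (iid_pmf D (N1 (Suc k)))
         else
           map_pmf (\<lambda>S. h @ [(upd k h, snd (last h)
                 + batch_avg (\<lambda>i. Fs i (upd k h) - Fs i (fst (last h))) S)])
             (iid_pmf D (N2 (Suc k) (upd k h) (fst (last h))))))"

end

theory Submission
  imports Defs
begin

(* Conditionally on the history, a fresh minibatch of N1 i.i.d. unbiased samples has mean-square
   error at most sigma^2/N1, since the cross terms of independent centred samples vanish.  The
   recursive branch adds to the previous error the average of N2 i.i.d. centred differences
   F_i(z^k) - F_i(z^(k-1)) - (F(z^k) - F(z^(k-1))); the cross term with the previous error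
   vanishes by unbiasedness, and each difference has second moment at most L0^2 |z^k - z^(k-1)|^2
   because 1/L0-co-coercivity makes every F_i L0-Lipschitz.  Mixing both branches with
   probability p_k gives the recursion.  With the prescribed batch sizes the two new terms are at
   most eps^2 (k+1)^(-2a) / 2 and eps^2 (k+1)^(-2a-1) / 2, and p_k is exactly the value for which
   the recursion maps the bound eps^2 k^(-2a) to eps^2 (k+1)^(-2a), so induction on k closes. *)

lemma expectation_cong_pmf:
  fixes f g :: "'b \<Rightarrow> 'c::{banach, second_countable_topology}"
  assumes "\<And>x. x \<in> set_pmf M \<Longrightarrow> f x = g x"
  shows "measure_pmf.expectation M f = measure_pmf.expectation M g"
  by (rule integral_cong_AE) (auto intro!: AE_pmfI assms)

lemma expectation_mono_pmf_finite:
  fixes f g :: "'b \<Rightarrow> real"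
  assumes "finite (set_pmf M)" and "\<And>x. x \<in> set_pmf M \<Longrightarrow> f x \<le> g x"
  shows "measure_pmf.expectation M f \<le> measure_pmf.expectation M g"
  by (rule integral_mono_AE) (auto intro!: AE_pmfI assms integrable_measure_pmf_finite)

lemma finite_set_bind_pmf:
  assumes "finite (set_pmf M)" and "\<And>x. x \<in> set_pmf M \<Longrightarrow> finite (set_pmf (f x))"
  shows "finite (set_pmf (M \<bind> f))"
  using assms by (simp add: set_bind_pmf)

lemma expectation_bind_pmf_finite:
  fixes h :: "'b \<Rightarrow> 'c::{banach, second_countable_topology}"
  assumes "finite (set_pmf M)" and "\<And>x. x \<in> set_pmf M \<Longrightarrow> finite (set_pmf (f x))"
  shows "measure_pmf.expectation (M \<bind> f) h
       = measure_pmf.expectation M (\<lambda>x. measure_pmf.expectation (f x) h)"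
  using assms
  by (simp add: pmf_expectation_bind[of "set_pmf M"] integral_measure_pmf[of "set_pmf M"])

lemma finite_set_iid_pmf: "finite (set_pmf D) \<Longrightarrow> finite (set_pmf (iid_pmf D n))"
  by (induction n) (auto intro!: finite_set_bind_pmf)

lemma length_in_set_iid_pmf: "S \<in> set_pmf (iid_pmf D n) \<Longrightarrow> length S = n"
  by (induction n arbitrary: S) (auto simp: set_bind_pmf)

lemma expectation_iid_pmf_Suc:
  fixes g :: "'b list \<Rightarrow> 'c::{banach, second_countable_topology}"
  assumes "finite (set_pmf D)"
  shows "measure_pmf.expectation (iid_pmf D (Suc n)) g
       = measure_pmf.expectation D (\<lambda>i. measure_pmf.expectation (iid_pmf D n) (\<lambda>S. g (i # S)))"
  using assms by (simp add: expectation_bind_pmf_finite finite_set_iid_pmf)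

lemma expectation_norm_sq_add_centred:
  fixes Y :: "'b \<Rightarrow> 'a::{real_inner, banach, second_countable_topology}"
  assumes fin: "finite (set_pmf D)" and centred: "measure_pmf.expectation D Y = 0"
  shows "measure_pmf.expectation D (\<lambda>i. (norm (c + Y i))\<^sup>2)
       = (norm c)\<^sup>2 + measure_pmf.expectation D (\<lambda>i. (norm (Y i))\<^sup>2)"
proof -
  have int: "integrable (measure_pmf D) f" for f :: "'b \<Rightarrow> 'c::{banach, second_countable_topology}"
    using fin by (rule integrable_measure_pmf_finite)
  have "(\<lambda>i. (norm (c + Y i))\<^sup>2) = (\<lambda>i. (norm c)\<^sup>2 + 2 * (c \<bullet> Y i) + (norm (Y i))\<^sup>2)"
    by (auto simp: power2_norm_eq_inner inner_add_left inner_add_right inner_commute)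
  moreover have "measure_pmf.expectation D (\<lambda>i. c \<bullet> Y i) = 0"
    using centred by (simp add: int)
  ultimately show ?thesis
    by (simp add: int)
qed

lemma expectation_norm_sq_add_iid_sum:
  fixes Y :: "'b \<Rightarrow> 'a::{real_inner, banach, second_countable_topology}"
  assumes fin: "finite (set_pmf D)" and centred: "measure_pmf.expectation D Y = 0"
  shows "measure_pmf.expectation (iid_pmf D n) (\<lambda>S. (norm (c + sum_list (map Y S)))\<^sup>2)
       = (norm c)\<^sup>2 + real n * measure_pmf.expectation D (\<lambda>i. (norm (Y i))\<^sup>2)"
proof (induction n arbitrary: c)
  case 0
  then show ?case by simp
next
  case (Suc n)
  have "measure_pmf.expectation (iid_pmf D (Suc n)) (\<lambda>S. (norm (c + sum_list (map Y S)))\<^sup>2)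
      = measure_pmf.expectation D (\<lambda>i. measure_pmf.expectation (iid_pmf D n)
           (\<lambda>S. (norm ((c + Y i) + sum_list (map Y S)))\<^sup>2))"
    by (subst expectation_iid_pmf_Suc[OF fin]) (simp add: add.assoc)
  also have "\<dots> = measure_pmf.expectation D (\<lambda>i. (norm (c + Y i))\<^sup>2)
           + real n * measure_pmf.expectation D (\<lambda>i. (norm (Y i))\<^sup>2)"
    by (simp add: Suc.IH integrable_measure_pmf_finite fin)
  also have "\<dots> = (norm c)\<^sup>2 + real (Suc n) * measure_pmf.expectation D (\<lambda>i. (norm (Y i))\<^sup>2)"
    by (simp add: expectation_norm_sq_add_centred[OF fin centred] algebra_simps)
  finally show ?case .
qed

lemma sum_list_map_diff_const:
  fixes X :: "'b \<Rightarrow> 'a::real_vector"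
  shows "sum_list (map (\<lambda>i. X i - m) S) = sum_list (map X S) - real (length S) *\<^sub>R m"
  by (induction S) (auto simp: algebra_simps)

lemma expectation_norm_sq_add_batch_avg:
  fixes X :: "nat \<Rightarrow> 'a::{real_inner, banach, second_countable_topology}"
  assumes fin: "finite (set_pmf D)" and n: "n > 0"
    and mean: "measure_pmf.expectation D X = m"
  shows "measure_pmf.expectation (iid_pmf D n) (\<lambda>S. (norm (c + (batch_avg X S - m)))\<^sup>2)
       = (norm c)\<^sup>2 + measure_pmf.expectation D (\<lambda>i. (norm (X i - m))\<^sup>2) / real n"
proof -
  have centred: "measure_pmf.expectation D (\<lambda>i. X i - m) = 0"
    using mean by (simp add: integrable_measure_pmf_finite fin)
  have "measure_pmf.expectation (iid_pmf D n) (\<lambda>S. (norm (c + (batch_avg X S - m)))\<^sup>2)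
     = measure_pmf.expectation (iid_pmf D n) (\<lambda>S. (1 / real n)\<^sup>2 *
          (norm (real n *\<^sub>R c + sum_list (map (\<lambda>i. X i - m) S)))\<^sup>2)"
  proof (rule expectation_cong_pmf)
    fix S assume "S \<in> set_pmf (iid_pmf D n)"
    then have "c + (batch_avg X S - m)
        = (1 / real n) *\<^sub>R (real n *\<^sub>R c + sum_list (map (\<lambda>i. X i - m) S))"
      using n by (simp add: length_in_set_iid_pmf batch_avg_def sum_list_map_diff_const algebra_simps)
    then show "(norm (c + (batch_avg X S - m)))\<^sup>2 = (1 / real n)\<^sup>2 *
          (norm (real n *\<^sub>R c + sum_list (map (\<lambda>i. X i - m) S)))\<^sup>2"
      by (simp add: power_divide)
  qed
  also have "\<dots> = (1 / real n)\<^sup>2 * ((norm (real n *\<^sub>R c))\<^sup>2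
      + real n * measure_pmf.expectation D (\<lambda>i. (norm (X i - m))\<^sup>2))"
    by (simp add: expectation_norm_sq_add_iid_sum[OF fin centred])
  also have "\<dots> = (norm c)\<^sup>2 + measure_pmf.expectation D (\<lambda>i. (norm (X i - m))\<^sup>2) / real n"
    using n by (simp add: power_mult_distrib field_simps power2_eq_square)
  finally show ?thesis .
qed

lemma expectation_norm_sq_centred_le:
  fixes X :: "'b \<Rightarrow> 'a::{real_inner, banach, second_countable_topology}"
  assumes fin: "finite (set_pmf D)" and mean: "measure_pmf.expectation D X = m"
  shows "measure_pmf.expectation D (\<lambda>i. (norm (X i - m))\<^sup>2)
       \<le> measure_pmf.expectation D (\<lambda>i. (norm (X i))\<^sup>2)"
proof -
  have int: "integrable (measure_pmf D) f" for f :: "'b \<Rightarrow> 'c::{banach, second_countable_topology}"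
    using fin by (rule integrable_measure_pmf_finite)
  have "(\<lambda>i. (norm (X i - m))\<^sup>2) = (\<lambda>i. (norm (X i))\<^sup>2 - 2 * (m \<bullet> X i) + (norm m)\<^sup>2)"
    by (auto simp: power2_norm_eq_inner inner_diff_left inner_diff_right inner_commute)
  moreover have "measure_pmf.expectation D (\<lambda>i. m \<bullet> X i) = (norm m)\<^sup>2"
    using mean by (simp add: int power2_norm_eq_inner)
  ultimately show ?thesis
    by (simp add: int)
qed

lemma cocoercive_imp_lipschitz:
  fixes G :: "'a::real_inner \<Rightarrow> 'a"
  assumes coco: "cocoercive (1 / L) G" and L: "L > 0"
  shows "norm (G x - G y) \<le> L * norm (x - y)"
proof (cases "G x = G y")
  case False
  have "(1 / L) * (norm (G x - G y))\<^sup>2 \<le> inner (G x - G y) (x - y)"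
    using coco by (simp add: cocoercive_def)
  also have "\<dots> \<le> norm (G x - G y) * norm (x - y)"
    by (rule norm_cauchy_schwarz)
  finally show ?thesis
    using L False by (simp add: field_simps power2_eq_square)
qed (use L in simp)

lemma halpern_weights_identity:
  fixes t r :: real
  assumes "t > 0" and "t * r < 2"
  shows "(1 - t / (2 - t * r)) / 2 + t / (2 - t * r) * (1 / t + (1 - r) / 2) = 1"
proof -
  have "(1 - t / (2 - t * r)) / 2 + t / (2 - t * r) * (1 / t + (1 - r) / 2)
      = 1 / 2 + t / (2 - t * r) * ((2 - t * r) / (2 * t))"
    using assms(1) by (simp add: field_simps)
  also have "\<dots> = 1"
    using assms by simp
  finally show ?thesis .
qed

lemma halpern_schedule_step:
  fixes k a \<epsilon> :: real
  assumes k: "k > 0" and a: "a \<ge> 0"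
  defines "r \<equiv> k / (k + 1)"
  defines "p \<equiv> 1 - r powr (2 * a) / (2 - r powr (2 * a + 1))"
  shows "p * (\<epsilon>\<^sup>2 * (k + 1) powr (- (2 * a)) / 2)
           + (1 - p) * ((\<epsilon> * k powr (- a))\<^sup>2 + \<epsilon>\<^sup>2 * (k + 1) powr (- (2 * a + 1)) / 2)
         = (\<epsilon> * (k + 1) powr (- a))\<^sup>2"
proof -
  define t where "t = r powr (2 * a)"
  define E where "E = \<epsilon>\<^sup>2 * (k + 1) powr (- (2 * a))"
  have r: "0 < r" "r < 1" and r_compl: "1 - r = 1 / (k + 1)"
    using k by (simp_all add: r_def field_simps)
  have t: "0 < t" "t \<le> 1"
    using r a by (simp_all add: t_def powr_le1)
  have "t * r \<le> 1"
    using t r by (intro mult_le_one) auto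
  then have tr: "t * r < 2" by simp
  have p: "p = 1 - t / (2 - t * r)"
    using r by (simp add: p_def t_def powr_add)
  have sq: "(\<epsilon> * x powr (- a))\<^sup>2 = \<epsilon>\<^sup>2 * x powr (- (2 * a))" if "x > 0" for x :: real
    using that by (simp add: power_mult_distrib power2_eq_square powr_add[symmetric])
  have k_pow: "k powr (- (2 * a)) = (k + 1) powr (- (2 * a)) / t"
    using k by (simp add: t_def r_def powr_divide powr_minus field_simps)
  have k1_pow: "(k + 1) powr (- (2 * a + 1)) = (k + 1) powr (- (2 * a)) * (1 - r)"
    using k by (simp add: r_compl powr_diff powr_minus divide_inverse)
  have "p * (E / 2) + (1 - p) * (E / t + E * (1 - r) / 2)
      = E * (p / 2 + (1 - p) * (1 / t + (1 - r) / 2))"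
    by (simp add: algebra_simps)
  also have "p / 2 + (1 - p) * (1 / t + (1 - r) / 2) = 1"
    using halpern_weights_identity[OF t(1) tr] by (simp add: p)
  finally have "p * (E / 2) + (1 - p) * (E / t + E * (1 - r) / 2) = E" by simp
  moreover have "k + 1 > 0" using k by simp
  ultimately show ?thesis
    unfolding sq[OF k] sq[OF \<open>k + 1 > 0\<close>] k_pow k1_pow E_def by (simp add: mult.assoc)
qed

lemma halpern_prob_bounds:
  fixes r a :: real
  assumes "0 \<le> r" and "r \<le> 1" and "a \<ge> 0"
  shows "0 \<le> 1 - r powr (2 * a) / (2 - r powr (2 * a + 1))"
    and "1 - r powr (2 * a) / (2 - r powr (2 * a + 1)) \<le> 1"
proof -
  have "r powr (2 * a) \<le> 1" and "r powr (2 * a + 1) \<le> 1"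
    using assms by (simp_all add: powr_le1)
  then show "0 \<le> 1 - r powr (2 * a) / (2 - r powr (2 * a + 1))"
    and "1 - r powr (2 * a) / (2 - r powr (2 * a + 1)) \<le> 1"
    by (simp_all add: divide_le_eq)
qed

lemma div_nat_ceiling_le:
  fixes y c :: real
  assumes "y \<ge> 0" and "c > 0"
  shows "y / real (nat \<lceil>y / c\<rceil>) \<le> c"
proof (cases "y = 0")
  case False
  then have pos: "y / c > 0" using assms by simp
  moreover have le: "y / c \<le> real (nat \<lceil>y / c\<rceil>)" by linarith
  ultimately have "y / real (nat \<lceil>y / c\<rceil>) \<le> y / (y / c)"
    using assms by (intro divide_left_mono mult_pos_pos) auto
  also have "\<dots> = c" using False assms by simp
  finally show ?thesis .
qed (use assms in simp)

lemma finite_set_svrg_hist: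
  assumes "finite (set_pmf D)"
  shows "finite (set_pmf (svrg_hist Fs D p N1 N2 upd z0 k))"
  by (induction k) (auto intro!: finite_set_bind_pmf finite_set_iid_pmf assms)

lemma length_in_set_svrg_hist:
  "h \<in> set_pmf (svrg_hist Fs D p N1 N2 upd z0 k) \<Longrightarrow> length h = Suc k"
  by (induction k arbitrary: h) (auto simp: set_bind_pmf split: if_splits)

lemma expectation_svrg_hist_Suc:
  fixes g :: "('a::euclidean_space \<times> 'a) list \<Rightarrow> real"
  assumes fin: "finite (set_pmf D)" and "0 \<le> p (Suc k)" and "p (Suc k) \<le> 1"
  shows "measure_pmf.expectation (svrg_hist Fs D p N1 N2 upd z0 (Suc k)) g =
    measure_pmf.expectation (svrg_hist Fs D p N1 N2 upd z0 k) (\<lambda>h.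
      p (Suc k) * measure_pmf.expectation (iid_pmf D (N1 (Suc k)))
        (\<lambda>S. g (h @ [(upd k h, batch_avg (\<lambda>i. Fs i (upd k h)) S)]))
    + (1 - p (Suc k)) * measure_pmf.expectation (iid_pmf D (N2 (Suc k) (upd k h) (fst (last h))))
        (\<lambda>S. g (h @ [(upd k h, snd (last h)
             + batch_avg (\<lambda>i. Fs i (upd k h) - Fs i (fst (last h))) S)])))"
  unfolding svrg_hist.simps(2) using assms
  by (subst expectation_bind_pmf_finite)
    (auto simp: expectation_bind_pmf_finite finite_set_svrg_hist finite_set_iid_pmf algebra_simps
      intro!: finite_set_bind_pmf expectation_cong_pmf)

declare svrg_hist.simps(2) [simp del]

locale svrg_oracle =
  fixes Fs :: "nat \<Rightarrow> 'a::euclidean_space \<Rightarrow> 'a" and D :: "nat pmf"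
    and F :: "'a \<Rightarrow> 'a" and L0 \<sigma> :: real
  assumes finite_support: "finite (set_pmf D)"
    and unbiased: "\<And>z. measure_pmf.expectation D (\<lambda>i. Fs i z) = F z"
    and variance_bound: "\<And>z. measure_pmf.expectation D (\<lambda>i. (norm (Fs i z - F z))\<^sup>2) \<le> \<sigma>\<^sup>2"
    and lipschitz: "\<And>i x y. i \<in> set_pmf D \<Longrightarrow> norm (Fs i x - Fs i y) \<le> L0 * norm (x - y)"
begin

abbreviation estimator_error where
  "estimator_error p N1 N2 upd z0 k \<equiv> measure_pmf.expectation (svrg_hist Fs D p N1 N2 upd z0 k)
     (\<lambda>h. (norm (snd (h ! k) - F (fst (h ! k))))\<^sup>2)"

lemma integrable_svrg_hist: "integrable (measure_pmf (svrg_hist Fs D p N1 N2 upd z0 k)) f"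
  for f :: "_ \<Rightarrow> real"
  by (rule integrable_measure_pmf_finite[OF finite_set_svrg_hist[OF finite_support]])

lemma fresh_batch_error:
  assumes "n > 0"
  shows "measure_pmf.expectation (iid_pmf D n) (\<lambda>S. (norm (batch_avg (\<lambda>i. Fs i z) S - F z))\<^sup>2)
       \<le> \<sigma>\<^sup>2 / real n"
  using expectation_norm_sq_add_batch_avg[OF finite_support assms unbiased, of 0] variance_bound
  by (simp add: divide_right_mono)

(* For n = 0 the batch average is 0 and the division by n yields 0, so that case needs z' = z;
   the prescribed N2 vanishes only then. *)
lemma recursive_batch_error:
  assumes "n = 0 \<Longrightarrow> z' = z"
  shows "measure_pmf.expectation (iid_pmf D n)
           (\<lambda>S. (norm (s + batch_avg (\<lambda>i. Fs i z' - Fs i z) S - F z'))\<^sup>2)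
       \<le> (norm (s - F z))\<^sup>2 + L0\<^sup>2 * (norm (z' - z))\<^sup>2 / real n"
proof (cases "n = 0")
  case True
  then show ?thesis using assms by (simp add: batch_avg_def)
next
  case False
  have mean: "measure_pmf.expectation D (\<lambda>i. Fs i z' - Fs i z) = F z' - F z"
    by (simp add: integrable_measure_pmf_finite finite_support unbiased)
  have "s + batch_avg (\<lambda>i. Fs i z' - Fs i z) S - F z'
      = (s - F z) + (batch_avg (\<lambda>i. Fs i z' - Fs i z) S - (F z' - F z))" for S
    by (simp add: algebra_simps)
  moreover have "n > 0" using False by simp
  ultimately have "measure_pmf.expectation (iid_pmf D n)
           (\<lambda>S. (norm (s + batch_avg (\<lambda>i. Fs i z' - Fs i z) S - F z'))\<^sup>2)
      = (norm (s - F z))\<^sup>2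
        + measure_pmf.expectation D (\<lambda>i. (norm ((Fs i z' - Fs i z) - (F z' - F z)))\<^sup>2) / real n"
    by (simp only:) (rule expectation_norm_sq_add_batch_avg[OF finite_support _ mean])
  also have "measure_pmf.expectation D (\<lambda>i. (norm ((Fs i z' - Fs i z) - (F z' - F z)))\<^sup>2)
      \<le> measure_pmf.expectation D (\<lambda>i. (norm (Fs i z' - Fs i z))\<^sup>2)"
    by (rule expectation_norm_sq_centred_le[OF finite_support mean])
  also have "\<dots> \<le> measure_pmf.expectation D (\<lambda>i. L0\<^sup>2 * (norm (z' - z))\<^sup>2)"
    using lipschitz by (intro expectation_mono_pmf_finite[OF finite_support])
      (simp add: power_mono power_mult_distrib[symmetric])
  finally show ?thesis
    by (simp add: divide_right_mono)
qed

lemma estimator_error_0: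
  "N1 0 > 0 \<Longrightarrow> estimator_error p N1 N2 upd z0 0 \<le> \<sigma>\<^sup>2 / real (N1 0)"
  using fresh_batch_error by simp

lemma estimator_error_Suc_le:
  assumes p: "0 \<le> p (Suc k)" "p (Suc k) \<le> 1" and N1: "N1 (Suc k) > 0"
    and N2: "\<And>z z'. N2 (Suc k) z z' = 0 \<Longrightarrow> z = z'"
  shows "estimator_error p N1 N2 upd z0 (Suc k)
    \<le> measure_pmf.expectation (svrg_hist Fs D p N1 N2 upd z0 k)
        (\<lambda>h. p (Suc k) * (\<sigma>\<^sup>2 / real (N1 (Suc k)))
            + (1 - p (Suc k)) * ((norm (snd (h ! k) - F (fst (h ! k))))\<^sup>2
               + L0\<^sup>2 * (norm (upd k h - fst (h ! k)))\<^sup>2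
                 / real (N2 (Suc k) (upd k h) (fst (h ! k)))))"
proof -
  let ?H = "svrg_hist Fs D p N1 N2 upd z0 k"
  have last_eq: "last h = h ! k" if "h \<in> set_pmf ?H" for h
    using length_in_set_svrg_hist[OF that] by (cases h rule: rev_cases) (auto simp: nth_append)
  have "estimator_error p N1 N2 upd z0 (Suc k) = measure_pmf.expectation ?H (\<lambda>h.
      p (Suc k) * measure_pmf.expectation (iid_pmf D (N1 (Suc k)))
        (\<lambda>S. (norm (batch_avg (\<lambda>i. Fs i (upd k h)) S - F (upd k h)))\<^sup>2)
    + (1 - p (Suc k)) * measure_pmf.expectation (iid_pmf D (N2 (Suc k) (upd k h) (fst (h ! k))))
        (\<lambda>S. (norm (snd (h ! k) + batch_avg (\<lambda>i. Fs i (upd k h) - Fs i (fst (h ! k))) S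
                     - F (upd k h)))\<^sup>2))"
    using p by (auto simp: expectation_svrg_hist_Suc[OF finite_support] nth_append last_eq
        length_in_set_svrg_hist intro!: expectation_cong_pmf)
  also have "\<dots> \<le> measure_pmf.expectation ?H
        (\<lambda>h. p (Suc k) * (\<sigma>\<^sup>2 / real (N1 (Suc k)))
            + (1 - p (Suc k)) * ((norm (snd (h ! k) - F (fst (h ! k))))\<^sup>2
               + L0\<^sup>2 * (norm (upd k h - fst (h ! k)))\<^sup>2
                 / real (N2 (Suc k) (upd k h) (fst (h ! k)))))"
    using p fresh_batch_error[OF N1] recursive_batch_error N2
    by (intro expectation_mono_pmf_finite[OF finite_set_svrg_hist[OF finite_support]]
        add_mono mult_left_mono) auto
  finally show ?thesis .
qed

lemma expectation_svrg_hist_increment: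
  assumes "0 \<le> p (Suc k)" and "p (Suc k) \<le> 1"
  shows "measure_pmf.expectation (svrg_hist Fs D p N1 N2 upd z0 (Suc k))
           (\<lambda>h. (norm (fst (h ! Suc k) - fst (h ! k)))\<^sup>2)
       = measure_pmf.expectation (svrg_hist Fs D p N1 N2 upd z0 k)
           (\<lambda>h. (norm (upd k h - fst (h ! k)))\<^sup>2)"
  using assms
  by (auto simp: expectation_svrg_hist_Suc[OF finite_support] nth_append algebra_simps
      length_in_set_svrg_hist intro!: expectation_cong_pmf)

lemma estimator_error_recursion:
  assumes p: "0 \<le> p (Suc k)" "p (Suc k) \<le> 1" and "N1 (Suc k) > 0" and "N2 (Suc k) > 0"
  shows "estimator_error p N1 (\<lambda>j _ _. N2 j) upd z0 (Suc k)
    \<le> p (Suc k) * \<sigma>\<^sup>2 / real (N1 (Suc k))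
      + (1 - p (Suc k)) * (estimator_error p N1 (\<lambda>j _ _. N2 j) upd z0 k
        + L0\<^sup>2 / real (N2 (Suc k))
          * measure_pmf.expectation (svrg_hist Fs D p N1 (\<lambda>j _ _. N2 j) upd z0 (Suc k))
              (\<lambda>h. (norm (fst (h ! Suc k) - fst (h ! k)))\<^sup>2))"
  using estimator_error_Suc_le[of p k N1 "\<lambda>j _ _. N2 j"] assms
  by (simp add: expectation_svrg_hist_increment[of p k, OF p] integrable_svrg_hist integral_add
      algebra_simps)

lemma estimator_error_le_schedule:
  fixes e c1 c2 :: "nat \<Rightarrow> real"
  assumes p: "\<And>k. 0 \<le> p k \<and> p k \<le> 1"
    and N1_pos: "\<And>k. N1 k > 0"
    and N1_bound: "\<And>k. \<sigma>\<^sup>2 / real (N1 k) \<le> c1 k"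
    and N2_zero: "\<And>k z z'. N2 k z z' = 0 \<Longrightarrow> z = z'"
    and N2_bound: "\<And>k z z'. L0\<^sup>2 * (norm (z - z'))\<^sup>2 / real (N2 k z z') \<le> c2 k"
    and e_0: "c1 0 \<le> e 0"
    and e_Suc: "\<And>k. p (Suc k) * c1 (Suc k) + (1 - p (Suc k)) * (e k + c2 (Suc k)) \<le> e (Suc k)"
  shows "estimator_error p N1 N2 upd z0 k \<le> e k"
proof (induction k)
  case 0
  show ?case
    using estimator_error_0[OF N1_pos] N1_bound e_0 by (meson order_trans)
next
  case (Suc k)
  have "estimator_error p N1 N2 upd z0 (Suc k)
    \<le> measure_pmf.expectation (svrg_hist Fs D p N1 N2 upd z0 k)
        (\<lambda>h. p (Suc k) * c1 (Suc k)
            + (1 - p (Suc k)) * ((norm (snd (h ! k) - F (fst (h ! k))))\<^sup>2 + c2 (Suc k)))"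
    using p[of "Suc k"] N1_pos N2_zero N1_bound N2_bound
    by (intro order_trans[OF estimator_error_Suc_le]
        expectation_mono_pmf_finite[OF finite_set_svrg_hist[OF finite_support]]
        add_mono mult_left_mono) auto
  also have "\<dots> = p (Suc k) * c1 (Suc k)
      + (1 - p (Suc k)) * (estimator_error p N1 N2 upd z0 k + c2 (Suc k))"
    by (simp add: integrable_svrg_hist integral_add algebra_simps)
  also have "\<dots> \<le> p (Suc k) * c1 (Suc k) + (1 - p (Suc k)) * (e k + c2 (Suc k))"
    using Suc.IH p[of "Suc k"] by (intro add_left_mono mult_left_mono) auto
  also have "\<dots> \<le> e (Suc k)"
    by (rule e_Suc)
  finally show ?case .
qed

lemma estimator_error_halpern_schedule:
  assumes \<epsilon>: "\<epsilon> > 0" and a: "a > 0" and L0: "L0 > 0" and \<sigma>: "\<sigma> > 0"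
  defines "p \<equiv> \<lambda>k. 1 - (real k / real (k + 1)) powr (2 * a)
                        / (2 - (real k / real (k + 1)) powr (2 * a + 1))"
    and "N1 \<equiv> \<lambda>k. nat \<lceil>2 * \<sigma>\<^sup>2 / (\<epsilon>\<^sup>2 * real (k + 1) powr (- (2 * a)))\<rceil>"
    and "N2 \<equiv> \<lambda>k zk zk1. nat \<lceil>2 * L0\<^sup>2 * (norm (zk - zk1))\<^sup>2
                                  / (\<epsilon>\<^sup>2 * real (k + 1) powr (- (2 * a + 1)))\<rceil>"
  shows "estimator_error p N1 N2 upd z0 k \<le> (\<epsilon> * real (k + 1) powr (- a))\<^sup>2"
proof (rule estimator_error_le_schedule)
  define c1 where "c1 k = \<epsilon>\<^sup>2 * real (k + 1) powr (- (2 * a)) / 2" for k :: nat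
  define c2 where "c2 k = \<epsilon>\<^sup>2 * real (k + 1) powr (- (2 * a + 1)) / 2" for k :: nat
  have c1: "c1 k > 0" and c2: "c2 k > 0" for k
    using \<epsilon> by (simp_all add: c1_def c2_def)
  have N1_eq: "N1 k = nat \<lceil>\<sigma>\<^sup>2 / c1 k\<rceil>" for k
    by (simp add: N1_def c1_def field_simps)
  have N2_eq: "N2 k z z' = nat \<lceil>L0\<^sup>2 * (norm (z - z'))\<^sup>2 / c2 k\<rceil>" for k z z'
    by (simp add: N2_def c2_def field_simps)
  show "0 \<le> p k \<and> p k \<le> 1" for k
    using halpern_prob_bounds[of "real k / real (k + 1)" a] a by (simp add: p_def)
  show "N1 k > 0" for k
    using c1[of k] \<sigma> by (simp add: N1_eq)
  show "\<sigma>\<^sup>2 / real (N1 k) \<le> c1 k" for k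
    unfolding N1_eq using c1 by (intro div_nat_ceiling_le) auto
  show "z = z'" if "N2 k z z' = 0" for k z z'
    using that c2[of k] L0 by (auto simp: N2_eq divide_le_0_iff mult_le_0_iff)
  show "L0\<^sup>2 * (norm (z - z'))\<^sup>2 / real (N2 k z z') \<le> c2 k" for k z z'
    unfolding N2_eq using c2 by (intro div_nat_ceiling_le) auto
  show "c1 0 \<le> (\<epsilon> * real (0 + 1) powr (- a))\<^sup>2"
    using \<epsilon> by (simp add: c1_def)
  show "p (Suc k) * c1 (Suc k) + (1 - p (Suc k)) * ((\<epsilon> * real (k + 1) powr (- a))\<^sup>2 + c2 (Suc k))
      \<le> (\<epsilon> * real (Suc k + 1) powr (- a))\<^sup>2" for k
    using halpern_schedule_step[of "real (Suc k)" a \<epsilon>] a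
    by (simp add: p_def c1_def c2_def add.commute)
qed

end

theorem lemma6:
  fixes Fs :: "nat \<Rightarrow> 'a::euclidean_space \<Rightarrow> 'a" and N :: nat and L0 \<sigma> :: real
    and D :: "nat pmf" and upd :: "nat \<Rightarrow> ('a \<times> 'a) list \<Rightarrow> 'a" and z0 :: 'a
    and F :: "'a \<Rightarrow> 'a"
  assumes F_def: "F = (\<lambda>z. (1 / real N) *\<^sub>R (\<Sum>i<N. Fs i z))"
    and N_pos: "N > 0"
    and L0_pos: "L0 > 0"
    and coco: "\<forall>i<N. cocoercive (1 / L0) (Fs i)"
    and D_supp: "set_pmf D \<subseteq> {..<N}"
    and sigma_pos: "\<sigma> > 0"
    and unbiased: "\<forall>z. measure_pmf.expectation D (\<lambda>i. Fs i z) = F z"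
    and var_bound: "\<forall>z. measure_pmf.expectation D (\<lambda>i. (norm (Fs i z - F z))\<^sup>2) \<le> \<sigma>\<^sup>2"
  shows
   "(\<forall>(p :: nat \<Rightarrow> real) (N1 :: nat \<Rightarrow> nat) (N2 :: nat \<Rightarrow> nat).
      (\<forall>k. 0 < p k \<and> p k \<le> 1) \<and> p 0 = 1 \<and> (\<forall>k. N1 k > 0) \<and> (\<forall>k. N2 k > 0) \<longrightarrow>
      (\<forall>k\<ge>1.
        measure_pmf.expectation (svrg_hist Fs D p N1 (\<lambda>j _ _. N2 j) upd z0 k)
          (\<lambda>h. (norm (snd (h ! k) - F (fst (h ! k))))\<^sup>2)
        \<le> p k * \<sigma>\<^sup>2 / real (N1 k)
          + (1 - p k) *
            (measure_pmf.expectation (svrg_hist Fs D p N1 (\<lambda>j _ _. N2 j) upd z0 (k - 1))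
               (\<lambda>h. (norm (snd (h ! (k - 1)) - F (fst (h ! (k - 1)))))\<^sup>2)
             + L0\<^sup>2 / real (N2 k) *
               measure_pmf.expectation (svrg_hist Fs D p N1 (\<lambda>j _ _. N2 j) upd z0 k)
                 (\<lambda>h. (norm (fst (h ! k) - fst (h ! (k - 1))))\<^sup>2))))
    \<and>
    (\<forall>(\<epsilon> :: real) (a :: real). \<epsilon> > 0 \<and> a > 0 \<longrightarrow>
      (let p = (\<lambda>k. 1 - (real k / real (k + 1)) powr (2 * a)
                        / (2 - (real k / real (k + 1)) powr (2 * a + 1)));
           N1 = (\<lambda>k. nat \<lceil>2 * \<sigma>\<^sup>2 / (\<epsilon>\<^sup>2 * real (k + 1) powr (- (2 * a)))\<rceil>);
           N2 = (\<lambda>k zk zk1. nat \<lceil>2 * L0\<^sup>2 * (norm (zk - zk1))\<^sup>2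
                                  / (\<epsilon>\<^sup>2 * real (k + 1) powr (- (2 * a + 1)))\<rceil>)
       in \<forall>k. measure_pmf.expectation (svrg_hist Fs D p N1 N2 upd z0 k)
                 (\<lambda>h. (norm (snd (h ! k) - F (fst (h ! k))))\<^sup>2)
               \<le> (\<epsilon> * real (k + 1) powr (- a))\<^sup>2))"
proof -
  interpret svrg_oracle Fs D F L0 \<sigma>
  proof
    show "finite (set_pmf D)"
      using D_supp finite_subset by blast
    show "norm (Fs i x - Fs i y) \<le> L0 * norm (x - y)" if "i \<in> set_pmf D" for i x y
      using that D_supp coco L0_pos by (auto intro: cocoercive_imp_lipschitz)
  qed (use unbiased var_bound in auto)
  show ?thesis
  proof (intro conjI allI impI)
    fix p :: "nat \<Rightarrow> real" and N1 N2 :: "nat \<Rightarrow> nat" and k :: nat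
    assume "(\<forall>k. 0 < p k \<and> p k \<le> 1) \<and> p 0 = 1 \<and> (\<forall>k. N1 k > 0) \<and> (\<forall>k. N2 k > 0)"
      and "k \<ge> 1"
    then show "estimator_error p N1 (\<lambda>j _ _. N2 j) upd z0 k
        \<le> p k * \<sigma>\<^sup>2 / real (N1 k)
          + (1 - p k) * (estimator_error p N1 (\<lambda>j _ _. N2 j) upd z0 (k - 1)
             + L0\<^sup>2 / real (N2 k) *
               measure_pmf.expectation (svrg_hist Fs D p N1 (\<lambda>j _ _. N2 j) upd z0 k)
                 (\<lambda>h. (norm (fst (h ! k) - fst (h ! (k - 1))))\<^sup>2))"
      using estimator_error_recursion[of p "k - 1" N1 N2 upd z0] by (cases k) (auto simp: less_imp_le)
  qed (use estimator_error_halpern_schedule[OF _ _ L0_pos sigma_pos] in \<open>auto simp: Let_def\<close>)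
qed

end
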